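(* Let $(X,\langle\cdot|\cdot\rangle)$, $A$, $B$, $C$, $Y$, $H$, $\hat B$, $V$ be as in the context, and let $\lambda\in\mathbb{C}$. Consider $A+C-\lambda B-\lambda^2$ as an operator with domain $D(A)$. (i) $H+\hat B+V-\lambda$ is not injective if and only if $A+C-\lambda B-\lambda^2$ is not injective; in that case $\ker(H+\hat B+V-\lambda)=\{(\xi,i\lambda\xi):\xi\in\ker(A+C-\lambda B-\lambda^2)\}$. (ii) $H+\hat B+V-\lambda$ is bijective if and only if $A+C-\lambda B-\lambda^2$ is bijective; in that case, for all $\eta=(\eta_1,\eta_2)\in Y$, $(H+\hat B+V-\lambda)^{-1}\eta=(\xi,i(\lambda\xi+\eta_1))$ where $\xi=(A+C-\lambda B-\lambda^2)^{-1}[(B+\lambda)\eta_1-i\eta_2]$.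
   Context: $(X,\langle\cdot|\cdot\rangle)$ is a nontrivial complex Hilbert space with norm $\|\cdot\|$. $A:D(A)\to X$ is a densely defined self-adjoint linear operator with $\langle\xi|A\xi\rangle\geqslant\varepsilon\langle\xi|\xi\rangle$ for all $\xi\in D(A)$ for some $\varepsilon>0$; $A^{1/2}$ is its positive self-adjoint square root. $B:D(A^{1/2})\to X$ is linear with $\|B\xi\|^2\leqslant a^2\|A^{1/2}\xi\|^2+b^2\|\xi\|^2$ for all $\xi\in D(A^{1/2})$, for some $a\in[0,1)$, $b\in\mathbb{R}$, and $B$ is symmetric or bounded. $C:D(A^{1/2})\to X$ is linear with $\|C\xi\|^2\leqslant c^2\|A^{1/2}\xi\|^2+d^2\|\xi\|^2$ for all $\xi\in D(A^{1/2})$, for some real $c,d$. $Y:=D(A^{1/2})\times X$ with inner product $(\xi|\eta):=\langle A^{1/2}\xi_1|A^{1/2}\eta_1\rangle+\langle\xi_2|\eta_2\rangle$. $H:D(A)\times D(A^{1/2})\to Y$, $H\xi:=(-i\xi_2,iA\xi_1)$; $\hat B:D(H)\to Y$, $\hat B\xi:=(0,-B\xi_2)$; $V:Y\to Y$, $V\xi:=(0,iC\xi_1)$; $H+\hat B+V-\lambda$ has domain $D(H)$. *)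

theory Defs
  imports Complex_Main
begin

class complex_vector = ab_group_add +
  fixes scaleC :: "complex \<Rightarrow> 'a \<Rightarrow> 'a" (infixr "*\<^sub>C" 75)
  assumes scaleC_add_right: "c *\<^sub>C (x + y) = c *\<^sub>C x + c *\<^sub>C y"
    and scaleC_add_left: "(c + d) *\<^sub>C x = c *\<^sub>C x + d *\<^sub>C x"
    and scaleC_scaleC: "c *\<^sub>C (d *\<^sub>C x) = (c * d) *\<^sub>C x"
    and scaleC_one: "1 *\<^sub>C x = x"

definition ipnorm :: "('a \<Rightarrow> 'a \<Rightarrow> complex) \<Rightarrow> 'a \<Rightarrow> real" where
  "ipnorm ip x = sqrt (Re (ip x x))"

definition complex_hilbert :: "('a::complex_vector \<Rightarrow> 'a \<Rightarrow> complex) \<Rightarrow> bool" where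
  "complex_hilbert ip \<longleftrightarrow>
     (\<forall>x y z. ip x (y + z) = ip x y + ip x z) \<and>
     (\<forall>x y c. ip x (c *\<^sub>C y) = c * ip x y) \<and>
     (\<forall>x y. ip y x = cnj (ip x y)) \<and>
     (\<forall>x. Re (ip x x) \<ge> 0) \<and>
     (\<forall>x. ip x x = 0 \<longrightarrow> x = 0) \<and>
     (\<forall>f :: nat \<Rightarrow> 'a.
        (\<forall>e>0. \<exists>N. \<forall>m\<ge>N. \<forall>n\<ge>N. ipnorm ip (f m - f n) < e) \<longrightarrow>
        (\<exists>l. \<forall>e>0. \<exists>N. \<forall>n\<ge>N. ipnorm ip (f n - l) < e))"

definition csubspace :: "'a::complex_vector set \<Rightarrow> bool" where
  "csubspace D \<longleftrightarrow> 0 \<in> D \<and> (\<forall>x\<in>D. \<forall>y\<in>D. x + y \<in> D) \<and> (\<forall>c. \<forall>x\<in>D. c *\<^sub>C x \<in> D)"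

definition clinear_on :: "'a::complex_vector set \<Rightarrow> ('a \<Rightarrow> 'b::complex_vector) \<Rightarrow> bool" where
  "clinear_on D f \<longleftrightarrow> csubspace D \<and>
     (\<forall>x\<in>D. \<forall>y\<in>D. f (x + y) = f x + f y) \<and> (\<forall>c. \<forall>x\<in>D. f (c *\<^sub>C x) = c *\<^sub>C f x)"

definition dense_in :: "('a::complex_vector \<Rightarrow> 'a \<Rightarrow> complex) \<Rightarrow> 'a set \<Rightarrow> bool" where
  "dense_in ip D \<longleftrightarrow> (\<forall>x. \<forall>e>0. \<exists>y\<in>D. ipnorm ip (x - y) < e)"

definition selfadjoint_op :: "('a::complex_vector \<Rightarrow> 'a \<Rightarrow> complex) \<Rightarrow> 'a set \<Rightarrow> ('a \<Rightarrow> 'a) \<Rightarrow> bool" where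
  "selfadjoint_op ip D A \<longleftrightarrow> clinear_on D A \<and> dense_in ip D \<and>
     (\<forall>\<eta> \<zeta>. (\<forall>\<xi>\<in>D. ip (A \<xi>) \<eta> = ip \<xi> \<zeta>) \<longleftrightarrow> (\<eta> \<in> D \<and> \<zeta> = A \<eta>))"

definition pos_sqrt_op :: "('a::complex_vector \<Rightarrow> 'a \<Rightarrow> complex) \<Rightarrow> 'a set \<Rightarrow> ('a \<Rightarrow> 'a)
     \<Rightarrow> 'a set \<Rightarrow> ('a \<Rightarrow> 'a) \<Rightarrow> bool" where
  "pos_sqrt_op ip D A DS S \<longleftrightarrow> selfadjoint_op ip DS S \<and>
     (\<forall>x\<in>DS. Im (ip x (S x)) = 0 \<and> Re (ip x (S x)) \<ge> 0) \<and>
     D = {x \<in> DS. S x \<in> DS} \<and> (\<forall>x\<in>D. S (S x) = A x)"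

text \<open>H + hat B + V - lambda on D(H) = D(A) x D(A^(1/2)), with
  H xi = (-i xi2, i A xi1), hat B xi = (0, - B xi2), V xi = (0, i C xi1).\<close>
definition HBV_op :: "('a::complex_vector \<Rightarrow> 'a) \<Rightarrow> ('a \<Rightarrow> 'a) \<Rightarrow> ('a \<Rightarrow> 'a) \<Rightarrow> complex
     \<Rightarrow> 'a \<times> 'a \<Rightarrow> 'a \<times> 'a" where
  "HBV_op A B C lam \<xi> =
     ((- \<i>) *\<^sub>C snd \<xi> - lam *\<^sub>C fst \<xi>,
      \<i> *\<^sub>C A (fst \<xi>) + (- B (snd \<xi>)) + \<i> *\<^sub>C C (fst \<xi>) - lam *\<^sub>C snd \<xi>)"

definition pencil_op :: "('a::complex_vector \<Rightarrow> 'a) \<Rightarrow> ('a \<Rightarrow> 'a) \<Rightarrow> ('a \<Rightarrow> 'a) \<Rightarrow> complex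
     \<Rightarrow> 'a \<Rightarrow> 'a" where
  "pencil_op A B C lam \<xi> = A \<xi> + C \<xi> - lam *\<^sub>C B \<xi> - (lam^2) *\<^sub>C \<xi>"

end

theory Submission
  imports Defs
begin

text \<open>Write \<open>\<xi> = (\<xi>\<^sub>1, \<xi>\<^sub>2)\<close>. The first component of \<open>HBV_op A B C \<lambda> \<xi> = \<eta>\<close> forces
  \<open>\<xi>\<^sub>2 = i(\<lambda>\<xi>\<^sub>1 + \<eta>\<^sub>1)\<close>; substituting this into the second component turns it into
  \<open>(A + C - \<lambda>B - \<lambda>\<^sup>2)\<xi>\<^sub>1 = (B + \<lambda>)\<eta>\<^sub>1 - i\<eta>\<^sub>2\<close>. So the equation for the operator matrix is
  equivalent to one for the quadratic pencil, and kernels, injectivity, surjectivity and inverses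
  transfer. The argument is purely algebraic: of the hypotheses it only uses \<open>DA \<subseteq> DS\<close> and the
  linearity of \<open>B\<close>.\<close>

global_interpretation complex_vector: module "scaleC :: complex \<Rightarrow> 'a \<Rightarrow> 'a::complex_vector"
  by unfold_locales (fact scaleC_add_right scaleC_add_left scaleC_scaleC scaleC_one)+

lemma scaleC_i_eq_iff: "\<i> *\<^sub>C (x::'a::complex_vector) = y \<longleftrightarrow> x = (- \<i>) *\<^sub>C y"
  by auto

lemma csubspace_add: "csubspace D \<Longrightarrow> x \<in> D \<Longrightarrow> y \<in> D \<Longrightarrow> x + y \<in> D"
  and csubspace_scaleC: "csubspace D \<Longrightarrow> x \<in> D \<Longrightarrow> c *\<^sub>C x \<in> D"
  and csubspace_zero: "csubspace D \<Longrightarrow> 0 \<in> D"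
  by (simp_all add: csubspace_def)

lemma clinear_on_add: "clinear_on D f \<Longrightarrow> x \<in> D \<Longrightarrow> y \<in> D \<Longrightarrow> f (x + y) = f x + f y"
  and clinear_on_scaleC: "clinear_on D f \<Longrightarrow> x \<in> D \<Longrightarrow> f (c *\<^sub>C x) = c *\<^sub>C f x"
  and clinear_on_csubspace: "clinear_on D f \<Longrightarrow> csubspace D"
  by (simp_all add: clinear_on_def)

lemma clinear_on_zero: "clinear_on D f \<Longrightarrow> f 0 = 0"
  using clinear_on_scaleC[of D f 0 0] by (simp add: clinear_on_csubspace csubspace_zero)

lemma HBV_op_eq_iff:
  assumes B: "clinear_on D B" and x1: "x1 \<in> D" and y1: "y1 \<in> D"
  shows "HBV_op A B C lam (x1, x2) = (y1, y2) \<longleftrightarrow>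
     x2 = \<i> *\<^sub>C (lam *\<^sub>C x1 + y1) \<and> pencil_op A B C lam x1 = B y1 + lam *\<^sub>C y1 - \<i> *\<^sub>C y2"
proof -
  have "(- \<i>) *\<^sub>C x2 - lam *\<^sub>C x1 = y1 \<longleftrightarrow> (- \<i>) *\<^sub>C x2 = lam *\<^sub>C x1 + y1"
    by (auto simp: algebra_simps)
  also have "\<dots> \<longleftrightarrow> x2 = \<i> *\<^sub>C (lam *\<^sub>C x1 + y1)"
    using scaleC_i_eq_iff[of "lam *\<^sub>C x1 + y1" x2] by auto
  finally have first: "(- \<i>) *\<^sub>C x2 - lam *\<^sub>C x1 = y1 \<longleftrightarrow> x2 = \<i> *\<^sub>C (lam *\<^sub>C x1 + y1)" .
  have second: "\<i> *\<^sub>C A x1 + - B x2 + \<i> *\<^sub>C C x1 - lam *\<^sub>C x2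
      = \<i> *\<^sub>C (pencil_op A B C lam x1 - (B y1 + lam *\<^sub>C y1))"
    if x2: "x2 = \<i> *\<^sub>C (lam *\<^sub>C x1 + y1)"
  proof -
    have D: "csubspace D" using B by (rule clinear_on_csubspace)
    have "B x2 = \<i> *\<^sub>C (lam *\<^sub>C B x1 + B y1)"
      using x1 y1 by (simp add: x2 clinear_on_add[OF B] clinear_on_scaleC[OF B]
          csubspace_add[OF D] csubspace_scaleC[OF D])
    then show ?thesis
      by (simp add: x2 pencil_op_def algebra_simps power2_eq_square)
  qed
  have third: "\<i> *\<^sub>C (pencil_op A B C lam x1 - (B y1 + lam *\<^sub>C y1)) = y2
      \<longleftrightarrow> pencil_op A B C lam x1 = B y1 + lam *\<^sub>C y1 - \<i> *\<^sub>C y2"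
    unfolding scaleC_i_eq_iff by (auto simp: algebra_simps)
  show ?thesis
    unfolding HBV_op_def fst_conv snd_conv prod.inject first using second third by metis
qed

context
  fixes DA DS :: "'a::complex_vector set" and B :: "'a \<Rightarrow> 'a"
  assumes B_lin: "clinear_on DS B" and DA_sub: "DA \<subseteq> DS"
begin

lemma HBV_op_eq_zero_iff:
  assumes "x1 \<in> DS"
  shows "HBV_op A B C lam (x1, x2) = (0, 0) \<longleftrightarrow> x2 = (\<i> * lam) *\<^sub>C x1 \<and> pencil_op A B C lam x1 = 0"
  using HBV_op_eq_iff[OF B_lin assms csubspace_zero[OF clinear_on_csubspace[OF B_lin]]]
  by (simp add: clinear_on_zero[OF B_lin])

lemma HBV_op_kernel:
  "{\<xi> \<in> DA \<times> DS. HBV_op A B C lam \<xi> = (0, 0)}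
     = {(\<xi>, (\<i> * lam) *\<^sub>C \<xi>) | \<xi>. \<xi> \<in> DA \<and> pencil_op A B C lam \<xi> = 0}"
  using DA_sub csubspace_scaleC[OF clinear_on_csubspace[OF B_lin]]
  by (auto simp: HBV_op_eq_zero_iff)

lemma HBV_op_solution:
  assumes \<eta>: "\<eta> \<in> DS \<times> UNIV" and x1: "x1 \<in> DA"
    and eq: "pencil_op A B C lam x1 = B (fst \<eta>) + lam *\<^sub>C fst \<eta> - \<i> *\<^sub>C snd \<eta>"
  shows "(x1, \<i> *\<^sub>C (lam *\<^sub>C x1 + fst \<eta>)) \<in> DA \<times> DS"
    and "HBV_op A B C lam (x1, \<i> *\<^sub>C (lam *\<^sub>C x1 + fst \<eta>)) = \<eta>"
proof -
  have D: "csubspace DS" using B_lin by (rule clinear_on_csubspace)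
  have "fst \<eta> \<in> DS" "x1 \<in> DS" using \<eta> x1 DA_sub by auto
  then show "(x1, \<i> *\<^sub>C (lam *\<^sub>C x1 + fst \<eta>)) \<in> DA \<times> DS"
    using x1 by (simp add: csubspace_add[OF D] csubspace_scaleC[OF D])
  show "HBV_op A B C lam (x1, \<i> *\<^sub>C (lam *\<^sub>C x1 + fst \<eta>)) = \<eta>"
    using HBV_op_eq_iff[OF B_lin \<open>x1 \<in> DS\<close> \<open>fst \<eta> \<in> DS\<close>] eq by (cases \<eta>) auto
qed

lemma HBV_op_preimage:
  assumes "x \<in> DA \<times> DS" "HBV_op A B C lam x = \<eta>" "fst \<eta> \<in> DS"
  shows "snd x = \<i> *\<^sub>C (lam *\<^sub>C fst x + fst \<eta>)"
    and "pencil_op A B C lam (fst x) = B (fst \<eta>) + lam *\<^sub>C fst \<eta> - \<i> *\<^sub>C snd \<eta>"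
  using assms DA_sub HBV_op_eq_iff[OF B_lin, of "fst x" "fst \<eta>" A C lam "snd x" "snd \<eta>"] by auto

lemma HBV_op_image_subset: "HBV_op A B C lam ` (DA \<times> DS) \<subseteq> DS \<times> UNIV"
proof (rule subsetI, elim imageE SigmaE)
  fix \<eta> x x1 x2 assume "\<eta> = HBV_op A B C lam x" "x = (x1, x2)" "x1 \<in> DA" "x2 \<in> DS"
  moreover have "csubspace DS" using B_lin by (rule clinear_on_csubspace)
  ultimately have "(- \<i>) *\<^sub>C x2 + (- lam) *\<^sub>C x1 \<in> DS"
    using DA_sub by (blast intro: csubspace_add csubspace_scaleC)
  with \<open>\<eta> = HBV_op A B C lam x\<close> \<open>x = (x1, x2)\<close> show "\<eta> \<in> DS \<times> UNIV"
    by (simp add: HBV_op_def)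
qed

lemma HBV_op_in_image_iff:
  assumes \<eta>: "\<eta> \<in> DS \<times> UNIV"
  shows "\<eta> \<in> HBV_op A B C lam ` (DA \<times> DS)
    \<longleftrightarrow> B (fst \<eta>) + lam *\<^sub>C fst \<eta> - \<i> *\<^sub>C snd \<eta> \<in> pencil_op A B C lam ` DA"
proof
  assume "\<eta> \<in> HBV_op A B C lam ` (DA \<times> DS)"
  then obtain x where "x \<in> DA \<times> DS" "HBV_op A B C lam x = \<eta>"
    by auto
  with HBV_op_preimage(2)[OF this] \<eta>
  show "B (fst \<eta>) + lam *\<^sub>C fst \<eta> - \<i> *\<^sub>C snd \<eta> \<in> pencil_op A B C lam ` DA"
    by (metis mem_Times_iff image_eqI)
next
  assume "B (fst \<eta>) + lam *\<^sub>C fst \<eta> - \<i> *\<^sub>C snd \<eta> \<in> pencil_op A B C lam ` DA"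
  then obtain x1 where "x1 \<in> DA" "pencil_op A B C lam x1 = B (fst \<eta>) + lam *\<^sub>C fst \<eta> - \<i> *\<^sub>C snd \<eta>"
    by auto
  from HBV_op_solution[OF \<eta> this] show "\<eta> \<in> HBV_op A B C lam ` (DA \<times> DS)"
    by (metis image_eqI)
qed

lemma inj_on_HBV_op_iff:
  "inj_on (HBV_op A B C lam) (DA \<times> DS) \<longleftrightarrow> inj_on (pencil_op A B C lam) DA"
proof
  assume inj: "inj_on (HBV_op A B C lam) (DA \<times> DS)"
  show "inj_on (pencil_op A B C lam) DA"
  proof (rule inj_onI)
    fix x y assume x: "x \<in> DA" and y: "y \<in> DA"
      and eq: "pencil_op A B C lam x = pencil_op A B C lam y"
    \<comment> \<open>\<open>(x, i\<lambda>x)\<close> and \<open>(y, i\<lambda>y)\<close> are both preimages of \<open>\<eta>\<close>\<close>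
    define \<eta> :: "'a \<times> 'a" where "\<eta> = (0, \<i> *\<^sub>C pencil_op A B C lam x)"
    have \<eta>: "\<eta> \<in> DS \<times> UNIV"
      using csubspace_zero[OF clinear_on_csubspace[OF B_lin]] by (simp add: \<eta>_def)
    have rhs: "B (fst \<eta>) + lam *\<^sub>C fst \<eta> - \<i> *\<^sub>C snd \<eta> = pencil_op A B C lam x"
      by (simp add: \<eta>_def clinear_on_zero[OF B_lin])
    note sol_x = HBV_op_solution[OF \<eta> x rhs[symmetric]]
      and sol_y = HBV_op_solution[OF \<eta> y trans[OF eq[symmetric] rhs[symmetric]]]
    show "x = y"
      using inj_onD[OF inj trans[OF sol_x(2) sol_y(2)[symmetric]] sol_x(1) sol_y(1)] by simp
  qed
next
  assume inj: "inj_on (pencil_op A B C lam) DA"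
  show "inj_on (HBV_op A B C lam) (DA \<times> DS)"
  proof (rule inj_onI)
    fix x y assume x: "x \<in> DA \<times> DS" and y: "y \<in> DA \<times> DS"
      and eq: "HBV_op A B C lam x = HBV_op A B C lam y"
    have "HBV_op A B C lam x \<in> DS \<times> UNIV"
      using HBV_op_image_subset x by (rule subsetD[OF _ imageI])
    then have "fst (HBV_op A B C lam x) \<in> DS"
      by (simp add: mem_Times_iff)
    note pre_x = HBV_op_preimage[OF x refl this]
      and pre_y = HBV_op_preimage[OF y eq[symmetric] this]
    have "fst x \<in> DA" "fst y \<in> DA"
      using x y by (simp_all add: mem_Times_iff)
    with inj_onD[OF inj trans[OF pre_x(2) pre_y(2)[symmetric]]] have "fst x = fst y" .
    then show "x = y"
      using pre_x(1) pre_y(1) by (simp add: prod_eq_iff)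
  qed
qed

lemma HBV_op_image_eq_iff:
  "HBV_op A B C lam ` (DA \<times> DS) = DS \<times> UNIV \<longleftrightarrow> pencil_op A B C lam ` DA = UNIV"
proof
  assume surj: "HBV_op A B C lam ` (DA \<times> DS) = DS \<times> UNIV"
  show "pencil_op A B C lam ` DA = UNIV"
  proof (intro set_eqI iffI UNIV_I)
    fix z :: 'a
    have \<eta>: "(0, \<i> *\<^sub>C z) \<in> DS \<times> UNIV"
      using csubspace_zero[OF clinear_on_csubspace[OF B_lin]] by simp
    with surj have "(0, \<i> *\<^sub>C z) \<in> HBV_op A B C lam ` (DA \<times> DS)"
      by (simp only:)
    then have "B 0 + lam *\<^sub>C 0 - \<i> *\<^sub>C \<i> *\<^sub>C z \<in> pencil_op A B C lam ` DA"
      using HBV_op_in_image_iff[OF \<eta>] by simp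
    then show "z \<in> pencil_op A B C lam ` DA"
      by (simp add: clinear_on_zero[OF B_lin])
  qed
next
  assume surj: "pencil_op A B C lam ` DA = UNIV"
  show "HBV_op A B C lam ` (DA \<times> DS) = DS \<times> UNIV"
  proof (rule subset_antisym[OF HBV_op_image_subset subsetI])
    fix \<eta> :: "'a \<times> 'a"
    assume "\<eta> \<in> DS \<times> UNIV"
    then show "\<eta> \<in> HBV_op A B C lam ` (DA \<times> DS)"
      by (simp only: HBV_op_in_image_iff surj UNIV_I)
  qed
qed

lemma bij_betw_HBV_op_iff:
  "bij_betw (HBV_op A B C lam) (DA \<times> DS) (DS \<times> UNIV) \<longleftrightarrow> bij_betw (pencil_op A B C lam) DA UNIV"
  unfolding bij_betw_def inj_on_HBV_op_iff HBV_op_image_eq_iff ..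

lemma the_inv_into_HBV_op:
  assumes bij: "bij_betw (pencil_op A B C lam) DA UNIV" and \<eta>: "\<eta> \<in> DS \<times> UNIV"
  shows "the_inv_into (DA \<times> DS) (HBV_op A B C lam) \<eta> =
    (let \<xi> = the_inv_into DA (pencil_op A B C lam) (B (fst \<eta>) + lam *\<^sub>C fst \<eta> - \<i> *\<^sub>C snd \<eta>)
     in (\<xi>, \<i> *\<^sub>C (lam *\<^sub>C \<xi> + fst \<eta>)))"
proof -
  define \<xi> where
    "\<xi> = the_inv_into DA (pencil_op A B C lam) (B (fst \<eta>) + lam *\<^sub>C fst \<eta> - \<i> *\<^sub>C snd \<eta>)"
  have \<xi>: "\<xi> \<in> DA"
    using bij_betw_the_inv_into[OF bij] by (auto simp: \<xi>_def bij_betw_def)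
  have eq: "pencil_op A B C lam \<xi> = B (fst \<eta>) + lam *\<^sub>C fst \<eta> - \<i> *\<^sub>C snd \<eta>"
    unfolding \<xi>_def using bij by (rule f_the_inv_into_f_bij_betw) simp
  note sol = HBV_op_solution[OF \<eta> \<xi> eq]
  have "inj_on (HBV_op A B C lam) (DA \<times> DS)"
    using bij unfolding bij_betw_HBV_op_iff[symmetric] by (rule bij_betw_imp_inj_on)
  from the_inv_into_f_eq[OF this sol(2) sol(1)] show ?thesis
    by (simp add: \<xi>_def Let_def)
qed

end

theorem theorem13:
  fixes ip :: "'a::complex_vector \<Rightarrow> 'a \<Rightarrow> complex"
    and DA DS :: "'a set"
    and A S B C :: "'a \<Rightarrow> 'a"
    and \<epsilon> a b c d :: real
    and lam :: complex
  assumes hilb: "complex_hilbert ip"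
    and nontriv: "\<exists>x::'a. x \<noteq> 0"
    and A_sa: "selfadjoint_op ip DA A"
    and eps: "\<epsilon> > 0"
    and A_pos: "\<forall>\<xi>\<in>DA. Im (ip \<xi> (A \<xi>)) = 0 \<and> Re (ip \<xi> (A \<xi>)) \<ge> \<epsilon> * Re (ip \<xi> \<xi>)"
    and S_sqrt: "pos_sqrt_op ip DA A DS S"
    and B_lin: "clinear_on DS B"
    and a_range: "0 \<le> a" "a < 1"
    and B_bound: "\<forall>\<xi>\<in>DS. (ipnorm ip (B \<xi>))^2 \<le> a^2 * (ipnorm ip (S \<xi>))^2 + b^2 * (ipnorm ip \<xi>)^2"
    and B_sym_or_bdd: "(\<forall>\<xi>\<in>DS. \<forall>\<eta>\<in>DS. ip (B \<xi>) \<eta> = ip \<xi> (B \<eta>))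
                       \<or> (\<exists>K. \<forall>\<xi>\<in>DS. ipnorm ip (B \<xi>) \<le> K * ipnorm ip \<xi>)"
    and C_lin: "clinear_on DS C"
    and C_bound: "\<forall>\<xi>\<in>DS. (ipnorm ip (C \<xi>))^2 \<le> c^2 * (ipnorm ip (S \<xi>))^2 + d^2 * (ipnorm ip \<xi>)^2"
  shows "((\<not> inj_on (HBV_op A B C lam) (DA \<times> DS)) \<longleftrightarrow> (\<not> inj_on (pencil_op A B C lam) DA))
       \<and> ((\<not> inj_on (pencil_op A B C lam) DA) \<longrightarrow>
            {\<xi> \<in> DA \<times> DS. HBV_op A B C lam \<xi> = (0, 0)}
              = {(\<xi>, (\<i> * lam) *\<^sub>C \<xi>) | \<xi>. \<xi> \<in> DA \<and> pencil_op A B C lam \<xi> = 0})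
       \<and> (bij_betw (HBV_op A B C lam) (DA \<times> DS) (DS \<times> UNIV) \<longleftrightarrow> bij_betw (pencil_op A B C lam) DA UNIV)
       \<and> (bij_betw (pencil_op A B C lam) DA UNIV \<longrightarrow>
            (\<forall>\<eta>\<in>DS \<times> UNIV.
               the_inv_into (DA \<times> DS) (HBV_op A B C lam) \<eta> =
                 (let \<xi> = the_inv_into DA (pencil_op A B C lam)
                            (B (fst \<eta>) + lam *\<^sub>C fst \<eta> - \<i> *\<^sub>C snd \<eta>)
                  in (\<xi>, \<i> *\<^sub>C (lam *\<^sub>C \<xi> + fst \<eta>)))))"
proof -
  have DA_sub: "DA \<subseteq> DS"
    using S_sqrt by (auto simp: pos_sqrt_op_def)
  show ?thesis
    using inj_on_HBV_op_iff[OF B_lin DA_sub] HBV_op_kernel[OF B_lin DA_sub]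
      bij_betw_HBV_op_iff[OF B_lin DA_sub] the_inv_into_HBV_op[OF B_lin DA_sub]
    by simp
qed

end
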